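(* Let $N \ge D \ge 1$ and $K \ge 2$ be integers. For the $(N,D,K)$ HetDAPAC system (defined in the context), the rate $$R=\frac{1}{K+1}$$ is achievable. It is achieved by a scheme whose load ratio is $\frac{1}{KD}$ and which requires common randomness of size $H(\mathcal{S})\geq KL$ ($q$-ary symbols), where $L$ is the message length.
   Context: An $(N,D,K)$ heterogeneous distributed attribute-based private access control (HetDAPAC) system is defined as follows. Each user is identified by an attribute vector $\bm{v}=(v_1,\dots,v_N)$ with $v_n\in\mathcal{V}_n$, $|\mathcal{V}_n|=K$ for each $n\in[N]$ (the ordering of each $\mathcal{V}_n$ is public). There are $K^N$ independent messages $W_{\bm{v}}$, one per attribute vector, each consisting of $L$ i.i.d. uniform symbols of a finite field $\mathbb{F}_q$; $\mathcal{W}$ denotes the set of all messages. There are $D+1$ non-colluding, non-communicating servers, each storing all of $\mathcal{W}$ together with a shared common randomness $\mathcal{S}$ consisting of i.i.d. uniform symbols of $\mathbb{F}_q$, independent of $\mathcal{W}$ and of the user's attribute vector, and unknown to the user. The user has a (random) attribute vector $\bm{v}^*=(v^*_1,\dots,v^*_N)$ and wants its designated message $W_{\bm{v}^*}$. Verification phase: for $n\in[D]$ the user reveals $v^*_n$ to server $n$ (a "dedicated" server); the user reveals $v^*_{D+1},\dots,v^*_N$ to server $D+1$ (the "central" server), which verifies them and announces them to servers $1,\dots,D$. Thus server $n\in[D]$ knows $v^*_n$ and $v^*_{[D+1:N]}$, and server $D+1$ knows only $v^*_{[D+1:N]}$. Access control: server $n\in[D]$ may only use the database $\mathcal{W}^n=\{W_{\bm{v}}: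 v_n=v^*_n,\ v_{[D+1:N]}=v^*_{[D+1:N]}\}$, and server $D+1$ may only use $\mathcal{W}^{D+1}=\{W_{\bm{v}}: v_{[D+1:N]}=v^*_{[D+1:N]}\}$. Retrieval phase: the user sends query $Q_n$ to server $n\in[D+1]$, with $I(Q_1,\dots,Q_{D+1};\mathcal{W})=0$; server $n$ returns an answer $A_n$ that is a deterministic function of $(Q_n,\mathcal{W}^n,\mathcal{S})$. Requirements: (correctness) $H(W_{\bm{v}^*}\mid Q_{[1:D+1]},A_{[1:D+1]})=0$; (attribute privacy) for $n\in[D]$, $I(Q_n; v^*_{[1:D]}\setminus v^*_n \mid \mathcal{S}, v^*_{[D+1:N]}, v^*_n)=0$, and $I(Q_{D+1}; v^*_{[1:D]}\mid \mathcal{S}, v^*_{[D+1:N]})=0$; (database secrecy) $I(\mathcal{W}\setminus\{W_{\bm{v}^*}\}; Q_{[1:D+1]},A_{[1:D+1]})=0$. The rate of a scheme is $L$ divided by the total download cost (total number of $\mathbb{F}_q$ symbols downloaded from all $D+1$ servers); a rate $R$ is achievable if some scheme (for some message length $L$) satisfying all requirements has rate $R$. The load ratio of a scheme (with equal download costs from each dedicated server) is the download cost from any one of servers $1,\dots,D$ divided by the download cost from server $D+1$. *)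

theory Defs
  imports "HOL-Probability.Probability"
begin

definition ent :: "'a pmf \<Rightarrow> real" where
  "ent p = - (\<Sum>x\<in>set_pmf p. pmf p x * log 2 (pmf p x))"

definition Ent :: "'w pmf \<Rightarrow> ('w \<Rightarrow> 'a) \<Rightarrow> real" where
  "Ent M X = ent (map_pmf X M)"

definition CondEnt :: "'w pmf \<Rightarrow> ('w \<Rightarrow> 'a) \<Rightarrow> ('w \<Rightarrow> 'b) \<Rightarrow> real" where
  "CondEnt M X Y = Ent M (\<lambda>w. (X w, Y w)) - Ent M Y"

definition CondMI :: "'w pmf \<Rightarrow> ('w \<Rightarrow> 'a) \<Rightarrow> ('w \<Rightarrow> 'b) \<Rightarrow> ('w \<Rightarrow> 'c) \<Rightarrow> real" where
  "CondMI M X Y Z = Ent M (\<lambda>w. (X w, Z w)) + Ent M (\<lambda>w. (Y w, Z w))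
                    - Ent M (\<lambda>w. (X w, Y w, Z w)) - Ent M Z"

definition MI :: "'w pmf \<Rightarrow> ('w \<Rightarrow> 'a) \<Rightarrow> ('w \<Rightarrow> 'b) \<Rightarrow> real" where
  "MI M X Y = CondMI M X Y (\<lambda>_. ())"

text \<open>Conventions: attributes are indexed 0..N-1 (paper's 1..N), the value set of each
  attribute is {0..<K}.  Servers are indexed 0..D (paper's 1..D+1): server n < D is the
  dedicated server of attribute n, server D is the central server, which knows attributes
  D..N-1 (paper's D+1..N).\<close>

definition attrs :: "nat \<Rightarrow> nat \<Rightarrow> (nat \<Rightarrow> nat) set" where
  "attrs N K = {v. (\<forall>i<N. v i < K) \<and> (\<forall>i\<ge>N. v i = 0)}"

text \<open>Databases: one message of L symbols of F_q per attribute vector (zero padding outside).\<close>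
definition dbs :: "nat \<Rightarrow> nat \<Rightarrow> nat \<Rightarrow> ((nat \<Rightarrow> nat) \<Rightarrow> nat \<Rightarrow> 'f::{finite,field}) set" where
  "dbs N K L = {W. \<forall>v l. (v \<notin> attrs N K \<or> L \<le> l) \<longrightarrow> W v l = 0}"

text \<open>Common randomness: m i.i.d. uniform symbols of F_q.\<close>
definition crs :: "nat \<Rightarrow> (nat \<Rightarrow> 'f::{finite,field}) set" where
  "crs m = {S. \<forall>i\<ge>m. S i = 0}"

text \<open>Database server n is allowed to use, given the user's attribute vector v.\<close>
definition acc :: "nat \<Rightarrow> nat \<Rightarrow> nat \<Rightarrow> (nat \<Rightarrow> nat) \<Rightarrow> nat \<Rightarrow> (nat \<Rightarrow> nat) set" where
  "acc N D K v n =
     (if n < D then {u \<in> attrs N K. u n = v n \<and> (\<forall>i. D \<le> i \<and> i < N \<longrightarrow> u i = v i)}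
      else {u \<in> attrs N K. \<forall>i. D \<le> i \<and> i < N \<longrightarrow> u i = v i})"

text \<open>Attribute values known to server n (after verification phase).\<close>
definition known :: "nat \<Rightarrow> nat \<Rightarrow> (nat \<Rightarrow> nat) \<Rightarrow> nat \<Rightarrow> (nat \<Rightarrow> nat option)" where
  "known N D v n = (\<lambda>i. if (n < D \<and> i = n) \<or> (D \<le> i \<and> i < N) then Some (v i) else None)"

definition rdb :: "((nat \<Rightarrow> nat) \<Rightarrow> nat \<Rightarrow> 'f::zero) \<Rightarrow> (nat \<Rightarrow> nat) set \<Rightarrow> ((nat \<Rightarrow> nat) \<Rightarrow> nat \<Rightarrow> 'f)" where
  "rdb W A = (\<lambda>u. if u \<in> A then W u else (\<lambda>_. 0))"

definition rv :: "(nat \<Rightarrow> nat) \<Rightarrow> nat set \<Rightarrow> (nat \<Rightarrow> nat option)" where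
  "rv v I = (\<lambda>i. if i \<in> I then Some (v i) else None)"

text \<open>A scheme: qd v is the distribution of the query tuple (query Q n to server n, a list
  of field symbols) generated by the user from its attribute vector v and private
  randomness; ans n is the deterministic answer function of server n, taking the query, the
  attribute values known to the server, the accessible part of the database, and the
  common randomness.\<close>
definition outcome ::
  "nat \<Rightarrow> nat \<Rightarrow> nat \<Rightarrow> nat \<Rightarrow> (nat \<Rightarrow> nat) pmf \<Rightarrow> ((nat \<Rightarrow> nat) \<Rightarrow> (nat \<Rightarrow> 'f list) pmf)
   \<Rightarrow> ((nat \<Rightarrow> nat) \<times> (nat \<Rightarrow> 'f list) \<times> ((nat \<Rightarrow> nat) \<Rightarrow> nat \<Rightarrow> 'f) \<times> (nat \<Rightarrow> 'f::{finite,field})) pmf"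
  where
  "outcome N K L m P qd =
     bind_pmf P (\<lambda>v. bind_pmf (qd v) (\<lambda>Q.
       bind_pmf (pmf_of_set (dbs N K L)) (\<lambda>W.
         bind_pmf (pmf_of_set (crs m)) (\<lambda>S. return_pmf (v, Q, W, S)))))"

definition answer ::
  "nat \<Rightarrow> nat \<Rightarrow> nat \<Rightarrow> (nat \<Rightarrow> 'f list \<Rightarrow> (nat \<Rightarrow> nat option) \<Rightarrow> ((nat \<Rightarrow> nat) \<Rightarrow> nat \<Rightarrow> 'f) \<Rightarrow> (nat \<Rightarrow> 'f) \<Rightarrow> 'f list)
   \<Rightarrow> nat \<Rightarrow> ((nat \<Rightarrow> nat) \<times> (nat \<Rightarrow> 'f list) \<times> ((nat \<Rightarrow> nat) \<Rightarrow> nat \<Rightarrow> 'f) \<times> (nat \<Rightarrow> 'f::{finite,field}))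
   \<Rightarrow> 'f list" where
  "answer N D K ans n = (\<lambda>(v, Q, W, S). ans n (Q n) (known N D v n) (rdb W (acc N D K v n)) S)"

text \<open>A valid (N,D,K) HetDAPAC scheme with message length L, common randomness of m symbols,
  and (constant) download cost c n from server n, for attribute distribution P.\<close>
definition hetdapac_scheme ::
  "nat \<Rightarrow> nat \<Rightarrow> nat \<Rightarrow> (nat \<Rightarrow> nat) pmf \<Rightarrow> nat \<Rightarrow> nat
   \<Rightarrow> ((nat \<Rightarrow> nat) \<Rightarrow> (nat \<Rightarrow> 'f list) pmf)
   \<Rightarrow> (nat \<Rightarrow> 'f list \<Rightarrow> (nat \<Rightarrow> nat option) \<Rightarrow> ((nat \<Rightarrow> nat) \<Rightarrow> nat \<Rightarrow> 'f) \<Rightarrow> (nat \<Rightarrow> 'f::{finite,field}) \<Rightarrow> 'f list)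
   \<Rightarrow> (nat \<Rightarrow> nat) \<Rightarrow> bool" where
  "hetdapac_scheme N D K P L m qd ans c \<longleftrightarrow>
     (let M = outcome N K L m P qd;
          vs = (\<lambda>(v, Q, W, S). v);
          Qs = (\<lambda>(v, Q, W, S). Q);
          Ws = (\<lambda>(v, Q, W, S). W);
          Ss = (\<lambda>(v, Q, W, S). S);
          Qall = (\<lambda>w. map (Qs w) [0..<Suc D]);
          Aall = (\<lambda>w. map (\<lambda>n. answer N D K ans n w) [0..<Suc D])
      in (\<forall>v\<in>set_pmf P. finite (set_pmf (qd v)))
       \<and> (\<forall>w\<in>set_pmf M. \<forall>n\<le>D. length (answer N D K ans n w) = c n)
       \<and> MI M Qall Ws = 0
       \<and> CondEnt M (\<lambda>w. Ws w (vs w)) (\<lambda>w. (Qall w, Aall w)) = 0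
       \<and> (\<forall>n<D. CondMI M (\<lambda>w. Qs w n) (\<lambda>w. rv (vs w) ({0..<D} - {n}))
                 (\<lambda>w. (Ss w, rv (vs w) {D..<N}, vs w n)) = 0)
       \<and> CondMI M (\<lambda>w. Qs w D) (\<lambda>w. rv (vs w) {0..<D}) (\<lambda>w. (Ss w, rv (vs w) {D..<N})) = 0
       \<and> CondMI M (\<lambda>w. (Ws w) (vs w := (\<lambda>_. 0))) (\<lambda>w. (Qall w, Aall w)) vs = 0)"

end

theory Submission
  imports Defs
begin

(* Call the attributes with a dedicated server (indices below D) lower, the others upper.
  For every n < D the user draws a uniform coefficient vector alpha_n indexed by the K^D lower
  attribute vectors u.  The central server returns, for all n < D and k < K, the padded
  combination S_(nK+k) + sum over u with u_n = k of alpha_n(u) W_(u,upper)(n).  Dedicated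
  server n gets alpha_n minus the indicator vector of the user's lower attributes and returns
  S_(nK+v_n) plus the same combination for k = v_n, which involves only messages it may access.
  The two answers differ by exactly W_v(n), so the D symbols of W_v cost D + KD downloaded
  symbols.  A uniform vector shifted by a fixed one is uniform, which gives attribute privacy;
  S pads every central answer and the dedicated answers are determined by the central one and
  W_v, which gives database secrecy. *)

section \<open>Information measures and independence\<close>

lemma sum_set_pmf_map_pmf:
  fixes f :: "'b \<Rightarrow> real"
  assumes "finite (set_pmf M)"
  shows "(\<Sum>y\<in>set_pmf (map_pmf g M). pmf (map_pmf g M) y * f y) = (\<Sum>w\<in>set_pmf M. pmf M w * f (g w))"
proof -
  have "finite (set_pmf (map_pmf g M))" using assms by simp
  then have "(\<Sum>y\<in>set_pmf (map_pmf g M). pmf (map_pmf g M) y * f y) = measure_pmf.expectation (map_pmf g M) f"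
    by (subst integral_measure_pmf) (auto simp: mult.commute)
  also have "\<dots> = measure_pmf.expectation M (\<lambda>w. f (g w))" by simp
  also have "\<dots> = (\<Sum>w\<in>set_pmf M. pmf M w * f (g w))"
    using assms by (subst integral_measure_pmf) (auto simp: mult.commute)
  finally show ?thesis .
qed

lemma Ent_eq_sum:
  assumes "finite (set_pmf M)"
  shows "Ent M X = - (\<Sum>w\<in>set_pmf M. pmf M w * log 2 (pmf (map_pmf X M) (X w)))"
  unfolding Ent_def ent_def using sum_set_pmf_map_pmf[OF assms, of X "\<lambda>y. log 2 (pmf (map_pmf X M) y)"]
  by simp

lemma ent_map_pmf_inj:
  assumes "inj f"
  shows "ent (map_pmf f p) = ent p"
proof -
  have "ent (map_pmf f p) = - (\<Sum>x\<in>f ` set_pmf p. pmf (map_pmf f p) x * log 2 (pmf (map_pmf f p) x))"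
    unfolding ent_def by simp
  also have "\<dots> = - (\<Sum>x\<in>set_pmf p. pmf (map_pmf f p) (f x) * log 2 (pmf (map_pmf f p) (f x)))"
    using assms by (subst sum.reindex) (auto intro: inj_on_subset)
  also have "\<dots> = ent p" unfolding ent_def by (simp add: pmf_map_inj'[OF assms])
  finally show ?thesis .
qed

lemma ent_pmf_of_set:
  assumes "finite A" "A \<noteq> {}"
  shows "ent (pmf_of_set A) = log 2 (real (card A))"
proof -
  have c: "card A > 0" using assms by (simp add: card_gt_0_iff)
  have "ent (pmf_of_set A) = - (\<Sum>x\<in>A. (1 / real (card A)) * log 2 (1 / real (card A)))"
    unfolding ent_def using assms by simp
  also have "\<dots> = log 2 (real (card A))" using c by (simp add: log_divide)
  finally show ?thesis .
qed

lemma CondMI_commute: "CondMI M X Y Z = CondMI M Y X Z"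
proof -
  have "Ent M (\<lambda>w. (Y w, X w, Z w))
      = ent (map_pmf (\<lambda>(a, b, c). (b, a, c)) (map_pmf (\<lambda>w. (X w, Y w, Z w)) M))"
    unfolding Ent_def by (simp add: pmf.map_comp o_def)
  also have "\<dots> = Ent M (\<lambda>w. (X w, Y w, Z w))"
    unfolding Ent_def by (rule ent_map_pmf_inj) (auto simp: inj_def)
  finally show ?thesis unfolding CondMI_def by simp
qed

lemma CondEnt_eq_0_if_determined:
  assumes fin: "finite (set_pmf M)"
    and det: "\<And>w w'. w \<in> set_pmf M \<Longrightarrow> w' \<in> set_pmf M \<Longrightarrow> Y w = Y w' \<Longrightarrow> X w = X w'"
  shows "CondEnt M X Y = 0"
proof -
  have "pmf (map_pmf (\<lambda>w. (X w, Y w)) M) (X w, Y w) = pmf (map_pmf Y M) (Y w)" if w: "w \<in> set_pmf M" for w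
  proof -
    have "{w'. (X w', Y w') = (X w, Y w)} \<inter> set_pmf M = {w'. Y w' = Y w} \<inter> set_pmf M"
      using det[OF w] by auto
    then have "measure M {w'. (X w', Y w') = (X w, Y w)} = measure M {w'. Y w' = Y w}"
      by (metis measure_Int_set_pmf)
    then show ?thesis by (simp add: pmf_map vimage_def)
  qed
  then show ?thesis unfolding CondEnt_def Ent_eq_sum[OF fin] by (simp cong: sum.cong)
qed

lemma CondMI_eq_0_if_factorizes:
  assumes fin: "finite (set_pmf M)"
    and factor: "\<And>w. w \<in> set_pmf M \<Longrightarrow>
      pmf (map_pmf (\<lambda>w. (X w, Y w, Z w)) M) (X w, Y w, Z w) * pmf (map_pmf Z M) (Z w)
      = pmf (map_pmf (\<lambda>w. (X w, Z w)) M) (X w, Z w) * pmf (map_pmf (\<lambda>w. (Y w, Z w)) M) (Y w, Z w)"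
  shows "CondMI M X Y Z = 0"
proof -
  let ?a = "\<lambda>w. pmf (map_pmf (\<lambda>w. (X w, Z w)) M) (X w, Z w)"
  let ?b = "\<lambda>w. pmf (map_pmf (\<lambda>w. (Y w, Z w)) M) (Y w, Z w)"
  let ?c = "\<lambda>w. pmf (map_pmf (\<lambda>w. (X w, Y w, Z w)) M) (X w, Y w, Z w)"
  let ?d = "\<lambda>w. pmf (map_pmf Z M) (Z w)"
  have "CondMI M X Y Z = (\<Sum>w\<in>set_pmf M. pmf M w * (log 2 (?c w) + log 2 (?d w) - log 2 (?a w) - log 2 (?b w)))"
    unfolding CondMI_def Ent_eq_sum[OF fin]
    by (simp add: sum_subtractf sum.distrib algebra_simps sum_negf)
  also have "\<dots> = 0"
  proof (rule sum.neutral, intro ballI)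
    fix w assume w: "w \<in> set_pmf M"
    have pos: "?a w > 0" "?b w > 0" "?c w > 0" "?d w > 0"
      using w by (auto simp: pmf_positive_iff)
    have "log 2 (?c w) + log 2 (?d w) = log 2 (?c w * ?d w)" using pos by (simp add: log_mult)
    also have "\<dots> = log 2 (?a w) + log 2 (?b w)" using pos by (simp add: factor[OF w] log_mult)
    finally show "pmf M w * (log 2 (?c w) + log 2 (?d w) - log 2 (?a w) - log 2 (?b w)) = 0" by simp
  qed
  finally show ?thesis .
qed

lemma measure_pair_pmf_Times:
  assumes "finite (set_pmf M)" "finite (set_pmf N)"
  shows "measure (pair_pmf M N) (A \<times> B) = measure M A * measure N B"
proof -
  have "measure (pair_pmf M N) (A \<times> B) = measure (pair_pmf M N) ((A \<times> B) \<inter> set_pmf (pair_pmf M N))"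
    by (rule measure_Int_set_pmf[symmetric])
  also have "(A \<times> B) \<inter> set_pmf (pair_pmf M N) = (A \<inter> set_pmf M) \<times> (B \<inter> set_pmf N)" by auto
  also have "measure (pair_pmf M N) \<dots> = measure M (A \<inter> set_pmf M) * measure N (B \<inter> set_pmf N)"
    using assms by (intro measure_pmf_prob_product) (auto intro: countable_finite)
  finally show ?thesis by (simp add: measure_Int_set_pmf)
qed

lemma CondMI_eq_0_if_independent:
  assumes fin: "finite (set_pmf M)"
    and indep: "map_pmf (\<lambda>w. (R w, B w)) M = pair_pmf MR MB"
    and X: "\<And>w. w \<in> set_pmf M \<Longrightarrow> X w = F (R w) (g (B w))"
    and Y: "\<And>w. w \<in> set_pmf M \<Longrightarrow> Y w = f (B w)"
    and Z: "\<And>w. w \<in> set_pmf M \<Longrightarrow> Z w = g (B w)"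
  shows "CondMI M X Y Z = 0"
proof (rule CondMI_eq_0_if_factorizes[OF fin])
  fix w assume w: "w \<in> set_pmf M"
  let ?p = "pair_pmf MR MB"
  have supp: "set_pmf ?p = (\<lambda>w. (R w, B w)) ` set_pmf M" by (simp flip: indep)
  have "finite (set_pmf MR)"
    using fin by (metis supp map_fst_pair_pmf set_map_pmf finite_imageI)
  moreover have "finite (set_pmf MB)"
    using fin by (metis supp map_snd_pair_pmf set_map_pmf finite_imageI)
  ultimately have prod: "measure ?p (A \<times> C) = measure MR A * measure MB C" for A C
    by (rule measure_pair_pmf_Times)
  have factor: "pmf (map_pmf h M) x = measure MR A * measure MB C"
    if "\<And>w. w \<in> set_pmf M \<Longrightarrow> h w = H (R w) (B w)" and "(\<lambda>(r, b). H r b) -` {x} = A \<times> C"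
    for h :: "_ \<Rightarrow> 'z" and H x A C
  proof -
    have "map_pmf h M = map_pmf (\<lambda>(r, b). H r b) (map_pmf (\<lambda>w. (R w, B w)) M)"
      by (simp add: pmf.map_comp o_def that(1) cong: map_pmf_cong)
    then show ?thesis by (simp add: indep pmf_map that(2) prod)
  qed
  have "pmf (map_pmf (\<lambda>w. (X w, Y w, Z w)) M) (X w, Y w, Z w)
      = measure MR {r. F r (Z w) = X w} * measure MB {b. f b = Y w \<and> g b = Z w}"
    by (rule factor[of _ "\<lambda>r b. (F r (g b), f b, g b)"]) (auto simp: X Y Z)
  moreover have "pmf (map_pmf (\<lambda>w. (X w, Z w)) M) (X w, Z w)
      = measure MR {r. F r (Z w) = X w} * measure MB {b. g b = Z w}"
    by (rule factor[of _ "\<lambda>r b. (F r (g b), g b)"]) (auto simp: X Z)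
  moreover have "pmf (map_pmf (\<lambda>w. (Y w, Z w)) M) (Y w, Z w)
      = measure MR UNIV * measure MB {b. f b = Y w \<and> g b = Z w}"
    by (rule factor[of _ "\<lambda>r b. (f b, g b)"]) (auto simp: Y Z)
  moreover have "pmf (map_pmf Z M) (Z w) = measure MR UNIV * measure MB {b. g b = Z w}"
    by (rule factor[of _ "\<lambda>r b. g b"]) (auto simp: Z)
  ultimately show "pmf (map_pmf (\<lambda>w. (X w, Y w, Z w)) M) (X w, Y w, Z w) * pmf (map_pmf Z M) (Z w) =
      pmf (map_pmf (\<lambda>w. (X w, Z w)) M) (X w, Z w) * pmf (map_pmf (\<lambda>w. (Y w, Z w)) M) (Y w, Z w)"
    by simp
qed

lemma pair_pmf_of_set:
  assumes "finite A" "A \<noteq> {}" "finite B" "B \<noteq> {}"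
  shows "pair_pmf (pmf_of_set A) (pmf_of_set B) = pmf_of_set (A \<times> B)"
  by (rule pmf_eqI) (auto simp: pmf_pair assms card_cartesian_product indicator_def)

lemma bind_pmf_pair_pmf_const:
  assumes "\<And>v. v \<in> set_pmf P \<Longrightarrow> map_pmf (\<lambda>u. (\<rho> v u, \<beta> v u)) U = pair_pmf MR (MB v)"
  shows "bind_pmf P (\<lambda>v. map_pmf (\<lambda>u. (\<rho> v u, (v, \<beta> v u))) U)
       = pair_pmf MR (bind_pmf P (\<lambda>v. map_pmf (Pair v) (MB v)))"
proof -
  have "bind_pmf P (\<lambda>v. map_pmf (\<lambda>u. (\<rho> v u, (v, \<beta> v u))) U)
      = bind_pmf P (\<lambda>v. map_pmf (\<lambda>(r, b). (r, (v, b))) (map_pmf (\<lambda>u. (\<rho> v u, \<beta> v u)) U))"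
    by (simp add: pmf.map_comp o_def)
  also have "\<dots> = bind_pmf P (\<lambda>v. map_pmf (\<lambda>(r, b). (r, (v, b))) (pair_pmf MR (MB v)))"
    by (rule bind_pmf_cong[OF refl]) (simp add: assms)
  also have "\<dots> = pair_pmf MR (bind_pmf P (\<lambda>v. map_pmf (Pair v) (MB v)))"
    unfolding pair_pmf_def
    by (simp add: map_bind_pmf bind_map_pmf bind_assoc_pmf bind_return_pmf map_pmf_def)
       (subst bind_commute_pmf, simp)
  finally show ?thesis .
qed

section \<open>Uniform randomness and attribute vectors\<close>

lemma mult_add_less_mult:
  fixes n j t :: nat
  assumes "n < D" "j < t"
  shows "n * t + j < D * t"
proof -
  have "n * t + j < Suc n * t" using assms(2) by simp
  also have "\<dots> \<le> D * t" using assms(1) by (intro mult_right_mono) simp_all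
  finally show ?thesis .
qed

lemma finite_attrs: "finite (attrs N K)"
proof -
  have eq: "attrs N K = {v. \<forall>i. (i \<in> {..<N} \<longrightarrow> v i \<in> {..<K}) \<and> (i \<notin> {..<N} \<longrightarrow> v i = 0)}"
    unfolding attrs_def lessThan_iff not_less by blast
  show ?thesis unfolding eq by (rule finite_set_of_finite_funs) auto
qed

lemma finite_crs: "finite (crs m :: (nat \<Rightarrow> 'f::{finite,field}) set)"
proof -
  have eq: "crs m = {S :: nat \<Rightarrow> 'f. \<forall>i. (i \<in> {..<m} \<longrightarrow> S i \<in> UNIV) \<and> (i \<notin> {..<m} \<longrightarrow> S i = 0)}"
    unfolding crs_def lessThan_iff not_less by blast
  show ?thesis unfolding eq by (rule finite_set_of_finite_funs) auto
qed

lemma zero_in_crs [simp]: "(\<lambda>_. 0) \<in> crs m"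
  unfolding crs_def by simp

lemma crs_nonempty [simp]: "crs m \<noteq> {}"
  using zero_in_crs by blast

lemma card_crs: "card (crs m :: (nat \<Rightarrow> 'f::{finite,field}) set) = CARD('f) ^ m"
proof -
  have "bij_betw (\<lambda>S. map S [0..<m]) (crs m :: (nat \<Rightarrow> 'f) set) {xs. set xs \<subseteq> UNIV \<and> length xs = m}"
  proof (rule bij_betwI[where g = "\<lambda>xs i. if i < m then xs ! i else 0"])
    show "(\<lambda>xs i. if i < m then xs ! i else 0) \<in> {xs. set xs \<subseteq> UNIV \<and> length xs = m} \<rightarrow> crs m"
      by (simp add: crs_def)
    show "(\<lambda>i. if i < m then map S [0..<m] ! i else 0) = S" if "S \<in> crs m" for S :: "nat \<Rightarrow> 'f"
      using that unfolding crs_def fun_eq_iff by (simp add: not_less)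
  qed (auto intro: nth_equalityI)
  then have "card (crs m :: (nat \<Rightarrow> 'f) set) = card {xs::'f list. set xs \<subseteq> UNIV \<and> length xs = m}"
    by (rule bij_betw_same_card)
  also have "\<dots> = CARD('f) ^ m" by (rule card_lists_length_eq) simp
  finally show ?thesis .
qed

lemma map_pmf_of_set_crs_translate:
  fixes c :: "nat \<Rightarrow> 'f::{finite,field}"
  assumes "c \<in> crs m"
  shows "map_pmf (\<lambda>S i. S i + c i) (pmf_of_set (crs m)) = pmf_of_set (crs m)"
proof (rule map_pmf_of_set_bij_betw)
  show "bij_betw (\<lambda>S i. S i + c i) (crs m) (crs m)"
    by (rule bij_betwI[where g = "\<lambda>S i. S i - c i"]) (use assms in \<open>auto simp: crs_def\<close>)
qed (simp_all add: finite_crs)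

lemma finite_dbs: "finite (dbs N K L :: ((nat \<Rightarrow> nat) \<Rightarrow> nat \<Rightarrow> 'f::{finite,field}) set)"
proof -
  have eq: "dbs N K L = {W :: (nat \<Rightarrow> nat) \<Rightarrow> nat \<Rightarrow> 'f.
      \<forall>v. (v \<in> attrs N K \<longrightarrow> W v \<in> crs L) \<and> (v \<notin> attrs N K \<longrightarrow> W v = (\<lambda>_. 0))}"
    unfolding dbs_def crs_def fun_eq_iff by blast
  show ?thesis unfolding eq by (rule finite_set_of_finite_funs) (simp_all add: finite_attrs finite_crs)
qed

lemma zero_in_dbs [simp]: "(\<lambda>_ _. 0) \<in> dbs N K L"
  unfolding dbs_def by simp

lemma dbs_nonempty [simp]: "dbs N K L \<noteq> {}"
  using zero_in_dbs by blast

fun enum_attrs :: "nat \<Rightarrow> nat \<Rightarrow> (nat \<Rightarrow> nat) list" where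
  "enum_attrs 0 K = [\<lambda>_. 0]"
| "enum_attrs (Suc d) K = concat (map (\<lambda>k. map (\<lambda>u. u(d := k)) (enum_attrs d K)) [0..<K])"

lemma set_enum_attrs: "set (enum_attrs d K) = attrs d K"
proof (induction d)
  case 0
  then show ?case by (auto simp: attrs_def fun_eq_iff)
next
  case (Suc d)
  show ?case
  proof
    show "set (enum_attrs (Suc d) K) \<subseteq> attrs (Suc d) K"
      using Suc.IH by (auto simp: attrs_def less_Suc_eq)
    show "attrs (Suc d) K \<subseteq> set (enum_attrs (Suc d) K)"
    proof
      fix u assume u: "u \<in> attrs (Suc d) K"
      then have "u(d := 0) \<in> set (enum_attrs d K)" using Suc.IH by (simp add: attrs_def)
      moreover have "u = (u(d := 0))(d := u d)" by simp
      ultimately have "u \<in> (\<lambda>u'. u'(d := u d)) ` set (enum_attrs d K)" by blast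
      moreover have "u d < K" using u by (simp add: attrs_def)
      ultimately show "u \<in> set (enum_attrs (Suc d) K)" by auto
    qed
  qed
qed

lemma distinct_enum_attrs:
  assumes "0 < K"
  shows "distinct (enum_attrs d K)"
proof (induction d)
  case 0
  then show ?case by simp
next
  case (Suc d)
  let ?layer = "\<lambda>k. map (\<lambda>u. u(d := k)) (enum_attrs d K)"
  have "(\<lambda>_. 0) \<in> set (enum_attrs d K)" using assms by (simp add: set_enum_attrs attrs_def)
  then have "enum_attrs d K \<noteq> []" by auto
  then have inj_layer: "inj_on ?layer {0..<K}"
    by (intro inj_onI) (metis fun_upd_same list.map_sel(1))
  have inj_upd: "inj_on (\<lambda>u. u(d := k)) (set (enum_attrs d K))" for k
    by (rule inj_on_inverseI[where g = "\<lambda>u. u(d := 0)"]) (auto simp: set_enum_attrs attrs_def fun_eq_iff)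
  have "x d = k" if "x \<in> set (?layer k)" for x k
    using that by auto
  then have disjoint: "set (?layer k) \<inter> set (?layer k') = {}" if "k \<noteq> k'" for k k'
    using that by blast
  show ?case
    unfolding enum_attrs.simps
  proof (rule distinct_concat)
    show "distinct (map ?layer [0..<K])"
      using inj_layer by (simp add: distinct_map)
    show "distinct ys" if "ys \<in> set (map ?layer [0..<K])" for ys
      using that Suc.IH inj_upd by (auto simp: distinct_map)
    show "set ys \<inter> set zs = {}"
      if ys_in: "ys \<in> set (map ?layer [0..<K])" and zs_in: "zs \<in> set (map ?layer [0..<K])"
        and "ys \<noteq> zs"
      for ys zs
    proof -
      obtain k k' where ys: "ys = ?layer k" and zs: "zs = ?layer k'"
        using ys_in zs_in by auto
      then have "k \<noteq> k'" using \<open>ys \<noteq> zs\<close> by auto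
      then show ?thesis unfolding ys zs by (rule disjoint)
    qed
  qed
qed

section \<open>The construction\<close>

locale hetdapac_construction =
  fixes N D K :: nat
  assumes D_le_N: "D \<le> N" and K_pos: "0 < K"
begin

abbreviation lows :: "(nat \<Rightarrow> nat) list" where
  "lows \<equiv> enum_attrs D K"

abbreviation nlows :: nat where
  "nlows \<equiv> length lows"

definition lower :: "(nat \<Rightarrow> nat) \<Rightarrow> nat \<Rightarrow> nat" where
  "lower v = (\<lambda>i. if i < D then v i else 0)"

definition with_upper :: "(nat \<Rightarrow> nat) \<Rightarrow> (nat \<Rightarrow> nat) \<Rightarrow> nat \<Rightarrow> nat" where
  "with_upper v u = (\<lambda>i. if i < D then u i else if i < N then v i else 0)"

definition with_known :: "(nat \<Rightarrow> nat option) \<Rightarrow> (nat \<Rightarrow> nat) \<Rightarrow> nat \<Rightarrow> nat" where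
  "with_known kn u = (\<lambda>i. if i < D then u i else case kn i of None \<Rightarrow> 0 | Some x \<Rightarrow> x)"

definition upper_code :: "(nat \<Rightarrow> nat option) \<Rightarrow> 'f::{finite,field} list" where
  "upper_code r = map (\<lambda>p. if r (D + p div K) = Some (p mod K) then 1 else 0) [0..<(N - D) * K]"

text \<open>The central query also carries a one-hot code of the upper attributes: correctness asks that
  the message be determined by queries and answers alone, so the attribute vector must be
  recoverable from the queries (its lower part is where \<open>Q 0\<close> deviates from the coefficients).\<close>
definition query_of :: "(nat \<Rightarrow> nat) \<Rightarrow> 'f::{finite,field} list \<Rightarrow> nat \<Rightarrow> 'f list" where
  "query_of v al n =
     (if n < D then map (\<lambda>j. al ! (n * nlows + j) - (if lows ! j = lower v then 1 else 0)) [0..<nlows]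
      else if n = D then al @ upper_code (rv v {D..<N}) else [])"

definition query :: "(nat \<Rightarrow> nat) \<Rightarrow> (nat \<Rightarrow> 'f::{finite,field}) \<Rightarrow> nat \<Rightarrow> 'f list" where
  "query v \<alpha> = query_of v (map \<alpha> [0..<D * nlows])"

definition query_dist :: "(nat \<Rightarrow> nat) \<Rightarrow> (nat \<Rightarrow> 'f::{finite,field} list) pmf" where
  "query_dist v = map_pmf (query v) (pmf_of_set (crs (D * nlows)))"

definition server_comb ::
  "'f::{finite,field} list \<Rightarrow> nat \<Rightarrow> nat \<Rightarrow> nat \<Rightarrow> (nat \<Rightarrow> nat option) \<Rightarrow> ((nat \<Rightarrow> nat) \<Rightarrow> nat \<Rightarrow> 'f) \<Rightarrow> 'f"
  where "server_comb q off n k kn Wr =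
    (\<Sum>j<nlows. q ! (off + j) * (if (lows ! j) n = k then Wr (with_known kn (lows ! j)) n else 0))"

definition server_answer ::
  "nat \<Rightarrow> 'f list \<Rightarrow> (nat \<Rightarrow> nat option) \<Rightarrow> ((nat \<Rightarrow> nat) \<Rightarrow> nat \<Rightarrow> 'f) \<Rightarrow> (nat \<Rightarrow> 'f::{finite,field}) \<Rightarrow> 'f list"
  where "server_answer n q kn Wr S =
    (if n < D then [S (n * K + the (kn n)) + server_comb q 0 n (the (kn n)) kn Wr]
     else map (\<lambda>i. S i + server_comb q (i div K * nlows) (i div K) (i mod K) kn Wr) [0..<K * D])"

definition download :: "nat \<Rightarrow> nat" where
  "download n = (if n < D then 1 else K * D)"

definition comb :: "(nat \<Rightarrow> nat) \<Rightarrow> 'f::{finite,field} list \<Rightarrow> ((nat \<Rightarrow> nat) \<Rightarrow> nat \<Rightarrow> 'f) \<Rightarrow> nat \<Rightarrow> nat \<Rightarrow> 'f" where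
  "comb v al W n k =
    (\<Sum>j<nlows. al ! (n * nlows + j) * (if (lows ! j) n = k then W (with_upper v (lows ! j)) n else 0))"

lemma lower_index:
  assumes "v \<in> attrs N K"
  obtains j0 where "j0 < nlows" "lows ! j0 = lower v" "\<And>j. j < nlows \<Longrightarrow> lows ! j = lower v \<longleftrightarrow> j = j0"
proof -
  have "lower v \<in> set lows"
    using assms D_le_N by (simp add: set_enum_attrs attrs_def lower_def)
  then obtain j0 where "j0 < nlows" "lows ! j0 = lower v"
    by (metis in_set_conv_nth)
  moreover note distinct_enum_attrs[OF K_pos, of D]
  ultimately show thesis
    using that by (metis nth_eq_iff_index_eq)
qed

lemma with_known_known: "n \<le> D \<Longrightarrow> with_known (known N D v n) u = with_upper v u"
  unfolding with_known_def known_def with_upper_def by (rule ext) simp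

lemma with_upper_attrs: "v \<in> attrs N K \<Longrightarrow> u \<in> set lows \<Longrightarrow> with_upper v u \<in> attrs N K"
  using D_le_N unfolding attrs_def set_enum_attrs with_upper_def by simp

lemma with_upper_acc_central: "v \<in> attrs N K \<Longrightarrow> u \<in> set lows \<Longrightarrow> with_upper v u \<in> acc N D K v D"
  using with_upper_attrs unfolding acc_def by (simp add: with_upper_def)

lemma with_upper_acc_dedicated:
  "v \<in> attrs N K \<Longrightarrow> u \<in> set lows \<Longrightarrow> n < D \<Longrightarrow> u n = v n \<Longrightarrow> with_upper v u \<in> acc N D K v n"
  using with_upper_attrs unfolding acc_def by (simp add: with_upper_def)

lemma with_upper_lower: "v \<in> attrs N K \<Longrightarrow> with_upper v (lower v) = v"
  unfolding attrs_def with_upper_def lower_def by (rule ext) (simp add: not_less)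

lemma query_dedicated:
  "n < D \<Longrightarrow> query v \<alpha> n = map (\<lambda>j. \<alpha> (n * nlows + j) - (if lows ! j = lower v then 1 else 0)) [0..<nlows]"
  unfolding query_def query_of_def by (simp add: mult_add_less_mult)

lemma answer_central:
  fixes \<alpha> :: "nat \<Rightarrow> 'f::{finite,field}"
  assumes v: "v \<in> attrs N K"
  shows "answer N D K server_answer D (v, query v \<alpha>, W, S)
       = map (\<lambda>i. S i + comb v (map \<alpha> [0..<D * nlows]) W (i div K) (i mod K)) [0..<K * D]"
proof -
  have "server_comb (query v \<alpha> D) (n * nlows) n k (known N D v D) (rdb W (acc N D K v D))
      = comb v (map \<alpha> [0..<D * nlows]) W n k" if n: "n < D" for n k
    unfolding server_comb_def comb_def
  proof (rule sum.cong[OF refl])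
    fix j assume "j \<in> {..<nlows}"
    then have j: "j < nlows" by simp
    then have "query v \<alpha> D ! (n * nlows + j) = map \<alpha> [0..<D * nlows] ! (n * nlows + j)"
      using mult_add_less_mult[OF n j] by (simp add: query_def query_of_def nth_append)
    moreover have "rdb W (acc N D K v D) (with_upper v (lows ! j)) = W (with_upper v (lows ! j))"
      using with_upper_acc_central[OF v] j by (simp add: rdb_def)
    ultimately show "query v \<alpha> D ! (n * nlows + j) *
        (if (lows ! j) n = k then rdb W (acc N D K v D) (with_known (known N D v D) (lows ! j)) n else 0)
      = map \<alpha> [0..<D * nlows] ! (n * nlows + j) *
        (if (lows ! j) n = k then W (with_upper v (lows ! j)) n else 0)"
      by (simp add: with_known_known)
  qed
  moreover have "i div K < D" if "i < K * D" for i
    using that K_pos by (simp add: less_mult_imp_div_less mult.commute)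
  ultimately show ?thesis
    unfolding answer_def server_answer_def by simp
qed

lemma answer_dedicated:
  fixes \<alpha> :: "nat \<Rightarrow> 'f::{finite,field}"
  assumes v: "v \<in> attrs N K" and n: "n < D"
  shows "answer N D K server_answer n (v, query v \<alpha>, W, S)
       = [S (n * K + v n) + (\<Sum>j<nlows. (\<alpha> (n * nlows + j) - (if lows ! j = lower v then 1 else 0))
              * (if (lows ! j) n = v n then W (with_upper v (lows ! j)) n else 0))]"
proof -
  have "server_comb (query v \<alpha> n) 0 n (v n) (known N D v n) (rdb W (acc N D K v n))
     = (\<Sum>j<nlows. (\<alpha> (n * nlows + j) - (if lows ! j = lower v then 1 else 0))
              * (if (lows ! j) n = v n then W (with_upper v (lows ! j)) n else 0))"
    unfolding server_comb_def
  proof (rule sum.cong[OF refl])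
    fix j assume "j \<in> {..<nlows}"
    then have j: "j < nlows" by simp
    have "(lows ! j) n = v n \<Longrightarrow> rdb W (acc N D K v n) (with_upper v (lows ! j)) = W (with_upper v (lows ! j))"
      using with_upper_acc_dedicated[OF v _ n] j by (simp add: rdb_def)
    then show "query v \<alpha> n ! (0 + j) *
        (if (lows ! j) n = v n then rdb W (acc N D K v n) (with_known (known N D v n) (lows ! j)) n else 0)
      = (\<alpha> (n * nlows + j) - (if lows ! j = lower v then 1 else 0))
        * (if (lows ! j) n = v n then W (with_upper v (lows ! j)) n else 0)"
      using j n by (simp add: query_dedicated with_known_known)
  qed
  then show ?thesis
    unfolding answer_def server_answer_def using n by (simp add: known_def)
qed

lemma comb_minus_dedicated_sum:
  fixes \<alpha> :: "nat \<Rightarrow> 'f::{finite,field}"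
  assumes v: "v \<in> attrs N K" and n: "n < D"
  shows "comb v (map \<alpha> [0..<D * nlows]) W n (v n)
       - (\<Sum>j<nlows. (\<alpha> (n * nlows + j) - (if lows ! j = lower v then 1 else 0))
              * (if (lows ! j) n = v n then W (with_upper v (lows ! j)) n else 0))
     = W v n"
proof -
  let ?X = "\<lambda>j. if (lows ! j) n = v n then W (with_upper v (lows ! j)) n else 0"
  obtain j0 where j0: "j0 < nlows" "lows ! j0 = lower v" and
    index: "\<And>j. j < nlows \<Longrightarrow> lows ! j = lower v \<longleftrightarrow> j = j0"
    using lower_index[OF v] by blast
  have "comb v (map \<alpha> [0..<D * nlows]) W n (v n) = (\<Sum>j<nlows. \<alpha> (n * nlows + j) * ?X j)"
    unfolding comb_def by (rule sum.cong) (simp_all add: mult_add_less_mult[OF n])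
  then have "comb v (map \<alpha> [0..<D * nlows]) W n (v n)
       - (\<Sum>j<nlows. (\<alpha> (n * nlows + j) - (if lows ! j = lower v then 1 else 0)) * ?X j)
      = (\<Sum>j<nlows. (if lows ! j = lower v then 1 else 0) * ?X j)"
    by (simp add: sum_subtractf[symmetric] algebra_simps)
  also have "\<dots> = (\<Sum>j<nlows. if j = j0 then ?X j0 else 0)"
    by (rule sum.cong[OF refl]) (simp add: index)
  also have "\<dots> = W v n"
    using j0 n by (simp add: with_upper_lower[OF v]) (simp add: lower_def)
  finally show ?thesis .
qed

lemma answer_dedicated_eq_central:
  fixes \<alpha> :: "nat \<Rightarrow> 'f::{finite,field}"
  assumes v: "v \<in> attrs N K" and n: "n < D"
  shows "answer N D K server_answer n (v, query v \<alpha>, W, S)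
       = [answer N D K server_answer D (v, query v \<alpha>, W, S) ! (n * K + v n) - W v n]"
proof -
  have vn: "v n < K" using v n D_le_N unfolding attrs_def by simp
  then have "n * K + v n < K * D"
    using mult_add_less_mult[OF n vn] by (simp add: mult.commute)
  with vn have "answer N D K server_answer D (v, query v \<alpha>, W, S) ! (n * K + v n)
      = S (n * K + v n) + comb v (map \<alpha> [0..<D * nlows]) W n (v n)"
    by (simp add: answer_central[OF v])
  then show ?thesis
    using comb_minus_dedicated_sum[OF v n, of \<alpha> W]
    by (simp add: answer_dedicated[OF v n] algebra_simps)
qed

lemma attrs_eq_if_queries_eq:
  fixes \<alpha> \<alpha>' :: "nat \<Rightarrow> 'f::{finite,field}"
  assumes D_pos: "0 < D" and v: "v \<in> attrs N K" and v': "v' \<in> attrs N K"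
    and Q0: "query v \<alpha> 0 = query v' \<alpha>' 0" and QD: "query v \<alpha> D = query v' \<alpha>' D"
  shows "v = v'"
proof
  fix i
  have "map \<alpha> [0..<D * nlows] @ upper_code (rv v {D..<N}) = map \<alpha>' [0..<D * nlows] @ upper_code (rv v' {D..<N})"
    using QD by (simp add: query_def query_of_def)
  then have coeffs: "map \<alpha> [0..<D * nlows] = map \<alpha>' [0..<D * nlows]"
    and upper: "(upper_code (rv v {D..<N}) :: 'f list) = upper_code (rv v' {D..<N})"
    by (simp_all add: upper_code_def)
  consider "i < D" | "D \<le> i" "i < N" | "N \<le> i" by linarith
  then show "v i = v' i"
  proof cases
    case 1
    obtain j0 where j0: "j0 < nlows" "lows ! j0 = lower v"
      using lower_index[OF v] by blast
    have "j0 < D * nlows" using mult_add_less_mult[OF D_pos j0(1)] by simp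
    then have "\<alpha> j0 = \<alpha>' j0" using arg_cong[OF coeffs, of "\<lambda>xs. xs ! j0"] by simp
    moreover have "query v \<alpha> 0 ! j0 = query v' \<alpha>' 0 ! j0" using Q0 by simp
    ultimately have "lows ! j0 = lower v'"
      using j0 D_pos by (simp add: query_dedicated split: if_splits)
    with j0(2) have "lower v = lower v'" by simp
    then show ?thesis using 1 unfolding lower_def by (metis (full_types))
  next
    case 2
    let ?p = "(i - D) * K + v i"
    have vi: "v i < K" using v 2 by (simp add: attrs_def)
    have "?p < (N - D) * K"
      using mult_add_less_mult[of "i - D" "N - D" "v i" K] vi 2 by simp
    moreover have "D + ?p div K = i" "?p mod K = v i" using vi 2 by simp_all
    ultimately have "upper_code (rv v' {D..<N}) ! ?p = (if rv v' {D..<N} i = Some (v i) then 1 else 0 :: 'f)"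
      "upper_code (rv v {D..<N}) ! ?p = (1 :: 'f)"
      using 2 by (simp_all add: upper_code_def rv_def)
    then have "rv v' {D..<N} i = Some (v i)"
      using upper by (metis zero_neq_one)
    then show ?thesis using 2 by (simp add: rv_def)
  next
    case 3
    then show ?thesis using v v' by (simp add: attrs_def)
  qed
qed

definition user_view :: "(nat \<Rightarrow> nat) \<Rightarrow> 'f::{finite,field} list \<Rightarrow> 'f list \<Rightarrow> (nat \<Rightarrow> 'f) \<Rightarrow> 'f list list \<times> 'f list list" where
  "user_view v al ad x =
    (map (query_of v al) [0..<Suc D], map (\<lambda>n. if n < D then [ad ! (n * K + v n) - x n] else ad) [0..<Suc D])"

lemma queries_answers_eq_user_view:
  assumes v: "v \<in> attrs N K"
  shows "(map (query v \<alpha>) [0..<Suc D], map (\<lambda>n. answer N D K server_answer n (v, query v \<alpha>, W, S)) [0..<Suc D])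
    = user_view v (map \<alpha> [0..<D * nlows]) (answer N D K server_answer D (v, query v \<alpha>, W, S)) (W v)"
proof -
  have "map (\<lambda>n. answer N D K server_answer n (v, query v \<alpha>, W, S)) [0..<Suc D]
      = map (\<lambda>n. if n < D then [answer N D K server_answer D (v, query v \<alpha>, W, S) ! (n * K + v n) - W v n]
                  else answer N D K server_answer D (v, query v \<alpha>, W, S)) [0..<Suc D]"
    by (rule map_cong[OF refl]) (auto simp: answer_dedicated_eq_central[OF v] less_Suc_eq simp del: upt_Suc)
  then show ?thesis
    unfolding user_view_def query_def[symmetric] by (simp only: prod.inject simp_thms)
qed

end

section \<open>The distribution of the outcome\<close>

type_synonym 'f coin = "(nat \<Rightarrow> 'f) \<times> ((nat \<Rightarrow> nat) \<Rightarrow> nat \<Rightarrow> 'f) \<times> (nat \<Rightarrow> 'f)"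

type_synonym 'f sample = "(nat \<Rightarrow> nat) \<times> (nat \<Rightarrow> 'f list) \<times> ((nat \<Rightarrow> nat) \<Rightarrow> nat \<Rightarrow> 'f) \<times> (nat \<Rightarrow> 'f)"

context hetdapac_construction
begin

definition coins :: "'f::{finite,field} coin set" where
  "coins = crs (D * nlows) \<times> (dbs N K D \<times> crs (K * D))"

lemma finite_coins: "finite coins"
  unfolding coins_def by (simp add: finite_crs finite_dbs)

lemma coins_nonempty: "coins \<noteq> {}"
  unfolding coins_def by simp

lemma pmf_of_set_coins:
  "pmf_of_set coins = pair_pmf (pmf_of_set (crs (D * nlows))) (pair_pmf (pmf_of_set (dbs N K D)) (pmf_of_set (crs (K * D))))"
  unfolding coins_def by (simp add: pair_pmf_of_set finite_crs finite_dbs)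

lemma outcome_eq:
  "outcome N K D (K * D) P query_dist
     = bind_pmf P (\<lambda>v. map_pmf (\<lambda>(\<alpha>, W, S). (v, query v \<alpha>, W, S)) (pmf_of_set coins))"
  unfolding outcome_def query_dist_def pmf_of_set_coins pair_pmf_def
  by (simp add: bind_map_pmf map_bind_pmf bind_assoc_pmf bind_return_pmf map_pmf_def)

lemma set_pmf_outcomeE:
  assumes "w \<in> set_pmf (outcome N K D (K * D) P query_dist)"
  obtains v \<alpha> W S where "w = (v, query v \<alpha>, W, S)" "v \<in> set_pmf P" "(\<alpha>, W, S) \<in> coins"
  using assms unfolding outcome_eq by (auto simp: finite_coins coins_nonempty)

lemma finite_set_pmf_outcome:
  "finite (set_pmf P) \<Longrightarrow> finite (set_pmf (outcome N K D (K * D) P query_dist))"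
  unfolding outcome_eq by (simp add: finite_coins coins_nonempty)

text \<open>Reduces independence statements about the outcome to the uniform coins, one attribute vector
  at a time.\<close>
lemma map_pmf_outcome_eq_pair_pmf:
  fixes R :: "'f::{finite,field} sample \<Rightarrow> 'r"
  assumes RB: "\<And>v \<alpha> W S. v \<in> set_pmf P \<Longrightarrow> (\<alpha>, W, S) \<in> coins \<Longrightarrow>
        R (v, query v \<alpha>, W, S) = \<rho> v (\<alpha>, W, S) \<and> B (v, query v \<alpha>, W, S) = (v, \<beta> v (\<alpha>, W, S))"
    and indep: "\<And>v. v \<in> set_pmf P \<Longrightarrow> map_pmf (\<lambda>u. (\<rho> v u, \<beta> v u)) (pmf_of_set coins) = pair_pmf MR (MB v)"
  shows "map_pmf (\<lambda>w. (R w, B w)) (outcome N K D (K * D) P query_dist)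
       = pair_pmf MR (bind_pmf P (\<lambda>v. map_pmf (Pair v) (MB v)))"
proof -
  have "map_pmf (\<lambda>w. (R w, B w)) (outcome N K D (K * D) P query_dist)
     = bind_pmf P (\<lambda>v. map_pmf (\<lambda>u. (\<rho> v u, (v, \<beta> v u))) (pmf_of_set coins))"
    unfolding outcome_eq map_bind_pmf pmf.map_comp
    by (rule bind_pmf_cong[OF refl], rule map_pmf_cong[OF refl])
      (use RB in \<open>auto simp: finite_coins coins_nonempty\<close>)
  also have "\<dots> = pair_pmf MR (bind_pmf P (\<lambda>v. map_pmf (Pair v) (MB v)))"
    by (rule bind_pmf_pair_pmf_const) (rule indep)
  finally show ?thesis .
qed

lemma coins_database_indep_query:
  "map_pmf (\<lambda>u. (fst (snd u), query v (fst u))) (pmf_of_set (coins :: 'f::{finite,field} coin set))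
     = pair_pmf (pmf_of_set (dbs N K D)) (query_dist v)"
proof -
  let ?A = "pmf_of_set (crs (D * nlows)) :: (nat \<Rightarrow> 'f) pmf"
  let ?W = "pmf_of_set (dbs N K D) :: ((nat \<Rightarrow> nat) \<Rightarrow> nat \<Rightarrow> 'f) pmf"
  let ?S = "pmf_of_set (crs (K * D)) :: (nat \<Rightarrow> 'f) pmf"
  have "map_pmf (\<lambda>u. (fst (snd u), query v (fst u))) (pair_pmf ?A (pair_pmf ?W ?S))
      = map_pmf (\<lambda>(x, y). (y, x)) (map_pmf (\<lambda>(a, b). (query v a, fst b)) (pair_pmf ?A (pair_pmf ?W ?S)))"
    by (simp add: pmf.map_comp o_def case_prod_beta)
  also have "\<dots> = pair_pmf ?W (map_pmf (query v) ?A)"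
    by (simp add: map_pair map_fst_pair_pmf flip: pair_commute_pmf)
  finally show ?thesis by (simp add: pmf_of_set_coins query_dist_def)
qed

lemma coins_coeffs_indep_randomness:
  "map_pmf (\<lambda>u. (map (fst u) [0..<D * nlows], snd (snd u))) (pmf_of_set (coins :: 'f::{finite,field} coin set))
     = pair_pmf (map_pmf (\<lambda>\<alpha>. map \<alpha> [0..<D * nlows]) (pmf_of_set (crs (D * nlows)))) (pmf_of_set (crs (K * D)))"
proof -
  let ?A = "pmf_of_set (crs (D * nlows)) :: (nat \<Rightarrow> 'f) pmf"
  let ?W = "pmf_of_set (dbs N K D) :: ((nat \<Rightarrow> nat) \<Rightarrow> nat \<Rightarrow> 'f) pmf"
  let ?S = "pmf_of_set (crs (K * D)) :: (nat \<Rightarrow> 'f) pmf"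
  have "map_pmf (\<lambda>u. (map (fst u) [0..<D * nlows], snd (snd u))) (pair_pmf ?A (pair_pmf ?W ?S))
      = map_pmf (\<lambda>(a, b). (map a [0..<D * nlows], snd b)) (pair_pmf ?A (pair_pmf ?W ?S))"
    by (rule map_pmf_cong) (simp_all add: case_prod_beta)
  then show ?thesis by (simp add: pmf_of_set_coins map_pair map_snd_pair_pmf)
qed

text \<open>The query to a dedicated server is a uniformly random vector shifted by a unit vector,
  so it is itself uniform, whatever the lower attributes are.\<close>
lemma coins_dedicated_query_indep_randomness:
  assumes v: "v \<in> attrs N K" and n: "n < D"
  shows "map_pmf (\<lambda>u. (query v (fst u) n, snd (snd u))) (pmf_of_set (coins :: 'f::{finite,field} coin set))
     = pair_pmf (map_pmf (\<lambda>\<alpha>. map (\<lambda>j. \<alpha> (n * nlows + j)) [0..<nlows]) (pmf_of_set (crs (D * nlows))))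
                (pmf_of_set (crs (K * D)))"
proof -
  let ?U = "pmf_of_set (crs (D * nlows)) :: (nat \<Rightarrow> 'f) pmf"
  let ?W = "pmf_of_set (dbs N K D) :: ((nat \<Rightarrow> nat) \<Rightarrow> nat \<Rightarrow> 'f) pmf"
  let ?S = "pmf_of_set (crs (K * D)) :: (nat \<Rightarrow> 'f) pmf"
  obtain j0 where j0: "j0 < nlows" and index: "\<And>j. j < nlows \<Longrightarrow> lows ! j = lower v \<longleftrightarrow> j = j0"
    using lower_index[OF v] by blast
  define e :: "nat \<Rightarrow> 'f" where "e = (\<lambda>i. if i = n * nlows + j0 then 1 else 0)"
  have e: "e \<in> crs (D * nlows)"
    using mult_add_less_mult[OF n j0] by (simp add: crs_def e_def)
  have "map_pmf (\<lambda>\<alpha>. query v \<alpha> n) ?U = map_pmf (\<lambda>\<alpha>. query v \<alpha> n) (map_pmf (\<lambda>S i. S i + e i) ?U)"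
    by (simp add: map_pmf_of_set_crs_translate[OF e])
  also have "\<dots> = map_pmf (\<lambda>\<alpha>. map (\<lambda>j. \<alpha> (n * nlows + j)) [0..<nlows]) ?U"
    unfolding pmf.map_comp o_def
    by (intro map_pmf_cong refl) (simp add: query_dedicated[OF n] e_def index)
  finally have "map_pmf (\<lambda>\<alpha>. query v \<alpha> n) ?U = map_pmf (\<lambda>\<alpha>. map (\<lambda>j. \<alpha> (n * nlows + j)) [0..<nlows]) ?U" .
  moreover have "map_pmf (\<lambda>u. (query v (fst u) n, snd (snd u))) (pmf_of_set (coins :: 'f coin set))
      = map_pmf (\<lambda>(a, b). (query v a n, snd b)) (pair_pmf ?U (pair_pmf ?W ?S))"
    unfolding pmf_of_set_coins by (rule map_pmf_cong) (simp_all add: case_prod_beta)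
  ultimately show ?thesis
    by (simp add: map_pair map_snd_pair_pmf)
qed

definition central_offsets :: "(nat \<Rightarrow> nat) \<Rightarrow> 'f::{finite,field} list \<Rightarrow> ((nat \<Rightarrow> nat) \<Rightarrow> nat \<Rightarrow> 'f) \<Rightarrow> nat \<Rightarrow> 'f" where
  "central_offsets v al W = (\<lambda>i. if i < K * D then comb v al W (i div K) (i mod K) else 0)"

definition dbs_without :: "(nat \<Rightarrow> nat) \<Rightarrow> ((nat \<Rightarrow> nat) \<Rightarrow> nat \<Rightarrow> 'f::{finite,field}) set" where
  "dbs_without v = {W \<in> dbs N K D. W v = (\<lambda>_. 0)}"

text \<open>Shifting \<open>S\<close> by the central offsets is a bijection of the coins: \<open>S\<close> one-time pads the
  central answer.\<close>
definition secrecy_split ::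
  "(nat \<Rightarrow> nat) \<Rightarrow> 'f::{finite,field} coin \<Rightarrow> ((nat \<Rightarrow> 'f) \<times> (nat \<Rightarrow> 'f) \<times> (nat \<Rightarrow> 'f)) \<times> ((nat \<Rightarrow> nat) \<Rightarrow> nat \<Rightarrow> 'f)"
  where "secrecy_split v = (\<lambda>(\<alpha>, W, S).
    ((\<alpha>, (\<lambda>i. S i + central_offsets v (map \<alpha> [0..<D * nlows]) W i), W v), W(v := (\<lambda>_. 0))))"

lemma finite_dbs_without: "finite (dbs_without v :: ((nat \<Rightarrow> nat) \<Rightarrow> nat \<Rightarrow> 'f::{finite,field}) set)"
  unfolding dbs_without_def by (rule finite_subset[OF _ finite_dbs]) blast

lemma dbs_without_nonempty: "dbs_without v \<noteq> {}"
  unfolding dbs_without_def using zero_in_dbs by blast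

definition secrecy_join ::
  "(nat \<Rightarrow> nat) \<Rightarrow> ((nat \<Rightarrow> 'f) \<times> (nat \<Rightarrow> 'f) \<times> (nat \<Rightarrow> 'f)) \<times> ((nat \<Rightarrow> nat) \<Rightarrow> nat \<Rightarrow> 'f) \<Rightarrow> 'f::{finite,field} coin"
  where "secrecy_join v = (\<lambda>((\<alpha>, S', x), W').
    (\<alpha>, W'(v := x), (\<lambda>i. S' i - central_offsets v (map \<alpha> [0..<D * nlows]) (W'(v := x)) i)))"

lemma bij_betw_secrecy_split:
  assumes v: "v \<in> attrs N K"
  shows "bij_betw (secrecy_split v) (coins :: 'f::{finite,field} coin set)
    ((crs (D * nlows) \<times> (crs (K * D) \<times> crs D)) \<times> dbs_without v)"
proof (rule bij_betwI[where g = "secrecy_join v"])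
  show "secrecy_split v \<in> coins \<rightarrow> (crs (D * nlows) \<times> (crs (K * D) \<times> crs D)) \<times> dbs_without v"
    using v by (auto simp: secrecy_split_def coins_def dbs_without_def crs_def dbs_def central_offsets_def)
  show "secrecy_join v \<in> (crs (D * nlows) \<times> (crs (K * D) \<times> crs D)) \<times> dbs_without v \<rightarrow> coins"
    using v by (auto simp: secrecy_join_def coins_def dbs_without_def crs_def dbs_def central_offsets_def)
  show "secrecy_join v (secrecy_split v u) = u" for u :: "'f coin"
    by (cases u) (simp add: secrecy_split_def secrecy_join_def)
  show "secrecy_split v (secrecy_join v t) = t"
    if "t \<in> (crs (D * nlows) \<times> (crs (K * D) \<times> crs D)) \<times> dbs_without v" for t
    using that by (auto simp: secrecy_split_def secrecy_join_def dbs_without_def)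
qed

lemma coins_central_view_indep_rest:
  assumes v: "v \<in> attrs N K"
  shows "map_pmf (\<lambda>(\<alpha>, W, S). ((map \<alpha> [0..<D * nlows], answer N D K server_answer D (v, query v \<alpha>, W, S), W v),
                                W(v := (\<lambda>_. 0)))) (pmf_of_set (coins :: 'f::{finite,field} coin set))
   = pair_pmf (map_pmf (\<lambda>(\<alpha>, S', x). (map \<alpha> [0..<D * nlows], map S' [0..<K * D], x))
                 (pmf_of_set (crs (D * nlows) \<times> (crs (K * D) \<times> crs D))))
              (pmf_of_set (dbs_without v))"
proof -
  let ?forget = "\<lambda>((\<alpha>, S', x), W'). ((map \<alpha> [0..<D * nlows], map S' [0..<K * D], x), W')"
  have "map_pmf (\<lambda>(\<alpha>, W, S). ((map \<alpha> [0..<D * nlows], answer N D K server_answer D (v, query v \<alpha>, W, S), W v),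
                                W(v := (\<lambda>_. 0)))) (pmf_of_set (coins :: 'f coin set))
      = map_pmf ?forget (map_pmf (secrecy_split v) (pmf_of_set (coins :: 'f coin set)))"
    unfolding pmf.map_comp
    by (rule map_pmf_cong[OF refl])
      (auto simp: secrecy_split_def answer_central[OF v] central_offsets_def)
  also have "map_pmf (secrecy_split v) (pmf_of_set coins)
      = pmf_of_set ((crs (D * nlows) \<times> (crs (K * D) \<times> crs D)) \<times> dbs_without v)"
    by (rule map_pmf_of_set_bij_betw[OF bij_betw_secrecy_split[OF v] coins_nonempty finite_coins])
  also have "\<dots> = pair_pmf (pmf_of_set (crs (D * nlows) \<times> (crs (K * D) \<times> crs D))) (pmf_of_set (dbs_without v))"
    by (rule pair_pmf_of_set[symmetric]) (simp_all add: finite_crs finite_dbs_without dbs_without_nonempty)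
  also have "map_pmf ?forget \<dots> = pair_pmf (map_pmf (\<lambda>(\<alpha>, S', x). (map \<alpha> [0..<D * nlows], map S' [0..<K * D], x))
      (pmf_of_set (crs (D * nlows) \<times> (crs (K * D) \<times> crs D)))) (map_pmf id (pmf_of_set (dbs_without v)))"
    unfolding map_pair[symmetric] by (rule map_pmf_cong) auto
  finally show ?thesis by (simp only: pmf.map_id)
qed

end

section \<open>The requirements\<close>

locale hetdapac_run = hetdapac_construction +
  fixes P :: "(nat \<Rightarrow> nat) pmf"
  assumes D_pos: "0 < D" and P_attrs: "set_pmf P \<subseteq> attrs N K"
begin

abbreviation run :: "'f::{finite,field} sample pmf" where
  "run \<equiv> outcome N K D (K * D) P query_dist"

lemma finite_set_pmf_run: "finite (set_pmf run)"
  using finite_set_pmf_outcome finite_subset[OF P_attrs finite_attrs] .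

lemma finite_query_dist: "\<forall>v\<in>set_pmf P. finite (set_pmf (query_dist v))"
  by (simp add: query_dist_def finite_crs)

lemma length_answer: "\<forall>w\<in>set_pmf (run :: 'f::{finite,field} sample pmf). \<forall>n\<le>D. length (answer N D K server_answer n w) = download n"
proof (intro ballI allI impI)
  fix w :: "'f sample" and n assume "w \<in> set_pmf run" and "n \<le> D"
  then obtain v \<alpha> W S where w_eq: "w = (v, query v \<alpha>, W, S)" and "v \<in> set_pmf P"
    by (elim set_pmf_outcomeE)
  then have v: "v \<in> attrs N K" using P_attrs by blast
  show "length (answer N D K server_answer n w) = download n"
    using \<open>n \<le> D\<close> by (cases "n < D") (simp_all add: w_eq answer_dedicated[OF v] answer_central[OF v] download_def)
qed

lemma queries_indep_database:
  "MI (run :: 'f::{finite,field} sample pmf) (\<lambda>w. map ((\<lambda>(v, Q, W, S). Q) w) [0..<Suc D]) (\<lambda>(v, Q, W, S). W) = 0"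
  unfolding MI_def
proof (subst CondMI_commute, rule CondMI_eq_0_if_independent[where R = "\<lambda>(v, Q, W, S). W" and B = "\<lambda>(v, Q, W, S). (v, Q)"
      and F = "\<lambda>r z. r" and g = "\<lambda>_. ()" and f = "\<lambda>(v, Q). map Q [0..<Suc D]"])
  show "map_pmf (\<lambda>w. ((\<lambda>(v, Q, W, S). W) w, (\<lambda>(v, Q, W, S). (v, Q)) w)) (run :: 'f sample pmf)
     = pair_pmf (pmf_of_set (dbs N K D)) (bind_pmf P (\<lambda>v. map_pmf (Pair v) (query_dist v)))"
    by (rule map_pmf_outcome_eq_pair_pmf[where \<rho> = "\<lambda>v u. fst (snd u)" and \<beta> = "\<lambda>v u. query v (fst u)"])
      (simp_all add: coins_database_indep_query)
qed (auto simp: finite_set_pmf_run)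

lemma dedicated_privacy:
  assumes n: "n < D"
  shows "CondMI (run :: 'f::{finite,field} sample pmf)
      (\<lambda>w. (\<lambda>(v, Q, W, S). Q) w n) (\<lambda>w. rv ((\<lambda>(v, Q, W, S). v) w) ({0..<D} - {n}))
      (\<lambda>w. ((\<lambda>(v, Q, W, S). S) w, rv ((\<lambda>(v, Q, W, S). v) w) {D..<N}, (\<lambda>(v, Q, W, S). v) w n)) = 0"
proof (rule CondMI_eq_0_if_independent[where R = "\<lambda>w. (\<lambda>(v, Q, W, S). Q) w n" and B = "\<lambda>(v, Q, W, S). (v, S)"
      and F = "\<lambda>r z. r" and g = "\<lambda>(v, S). (S, rv v {D..<N}, v n)" and f = "\<lambda>(v, S). rv v ({0..<D} - {n})"])
  show "map_pmf (\<lambda>w. ((\<lambda>w. (\<lambda>(v, Q, W, S). Q) w n) w, (\<lambda>(v, Q, W, S). (v, S)) w)) (run :: 'f sample pmf)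
     = pair_pmf (map_pmf (\<lambda>\<alpha>. map (\<lambda>j. \<alpha> (n * nlows + j)) [0..<nlows]) (pmf_of_set (crs (D * nlows))))
         (bind_pmf P (\<lambda>v. map_pmf (Pair v) (pmf_of_set (crs (K * D)))))"
  proof (rule map_pmf_outcome_eq_pair_pmf[where \<rho> = "\<lambda>v u. query v (fst u) n" and \<beta> = "\<lambda>v u. snd (snd u)"])
    fix v assume "v \<in> set_pmf P"
    then have "v \<in> attrs N K" using P_attrs by blast
    then show "map_pmf (\<lambda>u. (query v (fst u) n, snd (snd u))) (pmf_of_set coins)
       = pair_pmf (map_pmf (\<lambda>\<alpha>. map (\<lambda>j. \<alpha> (n * nlows + j)) [0..<nlows]) (pmf_of_set (crs (D * nlows))))
                  (pmf_of_set (crs (K * D)))"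
      by (rule coins_dedicated_query_indep_randomness[OF _ n])
  qed simp
qed (auto simp: finite_set_pmf_run)

lemma central_privacy:
  "CondMI (run :: 'f::{finite,field} sample pmf)
      (\<lambda>w. (\<lambda>(v, Q, W, S). Q) w D) (\<lambda>w. rv ((\<lambda>(v, Q, W, S). v) w) {0..<D})
      (\<lambda>w. ((\<lambda>(v, Q, W, S). S) w, rv ((\<lambda>(v, Q, W, S). v) w) {D..<N})) = 0"
proof (rule CondMI_eq_0_if_independent[where R = "\<lambda>w. take (D * nlows) ((\<lambda>(v, Q, W, S). Q) w D)"
      and B = "\<lambda>(v, Q, W, S). (v, S)" and F = "\<lambda>r z. r @ upper_code (snd z)"
      and g = "\<lambda>(v, S). (S, rv v {D..<N})" and f = "\<lambda>(v, S). rv v {0..<D}"])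
  show "map_pmf (\<lambda>w. ((\<lambda>w. take (D * nlows) ((\<lambda>(v, Q, W, S). Q) w D)) w, (\<lambda>(v, Q, W, S). (v, S)) w))
        (run :: 'f sample pmf)
     = pair_pmf (map_pmf (\<lambda>\<alpha>. map \<alpha> [0..<D * nlows]) (pmf_of_set (crs (D * nlows))))
         (bind_pmf P (\<lambda>v. map_pmf (Pair v) (pmf_of_set (crs (K * D)))))"
    by (rule map_pmf_outcome_eq_pair_pmf[where \<rho> = "\<lambda>v u. map (fst u) [0..<D * nlows]" and \<beta> = "\<lambda>v u. snd (snd u)"])
      (simp_all add: query_def query_of_def coins_coeffs_indep_randomness)
next
  fix w assume "w \<in> set_pmf (run :: 'f sample pmf)"
  then obtain v \<alpha> W S where "w = (v, query v \<alpha>, W, S)"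
    by (elim set_pmf_outcomeE)
  then show "(\<lambda>(v, Q, W, S). Q) w D = (\<lambda>r z. r @ upper_code (snd z)) (take (D * nlows) ((\<lambda>(v, Q, W, S). Q) w D))
      ((\<lambda>(v, S). (S, rv v {D..<N})) ((\<lambda>(v, Q, W, S). (v, S)) w))"
    by (simp add: query_def query_of_def)
qed (auto simp: finite_set_pmf_run)

lemma Ent_common_randomness:
  "Ent (run :: 'f::{finite,field} sample pmf) (\<lambda>(v, Q, W, S). S) \<ge> real (K * D) * log 2 (real CARD('f))"
proof -
  have "map_pmf (\<lambda>(v, Q, W, S). S) (run :: 'f sample pmf)
      = bind_pmf P (\<lambda>_. map_pmf snd (map_pmf snd (pmf_of_set (coins :: 'f coin set))))"
    unfolding outcome_eq map_bind_pmf pmf.map_comp o_def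
    by (intro bind_pmf_cong map_pmf_cong refl) auto
  also have "\<dots> = pmf_of_set (crs (K * D))"
    by (simp add: pmf_of_set_coins map_snd_pair_pmf)
  finally have "Ent (run :: 'f sample pmf) (\<lambda>(v, Q, W, S). S) = log 2 (real (card (crs (K * D) :: (nat \<Rightarrow> 'f) set)))"
    unfolding Ent_def by (simp add: ent_pmf_of_set finite_crs)
  also have "\<dots> = real (K * D) * log 2 (real CARD('f))"
    by (simp add: card_crs log_nat_power)
  finally show ?thesis by simp
qed

lemma database_secrecy:
  "CondMI (run :: 'f::{finite,field} sample pmf)
      (\<lambda>w. ((\<lambda>(v, Q, W, S). W) w) ((\<lambda>(v, Q, W, S). v) w := (\<lambda>_. 0)))
      (\<lambda>w. (map ((\<lambda>(v, Q, W, S). Q) w) [0..<Suc D], map (\<lambda>n. answer N D K server_answer n w) [0..<Suc D]))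
      (\<lambda>(v, Q, W, S). v) = 0"
proof (subst CondMI_commute, rule CondMI_eq_0_if_independent[where
      R = "\<lambda>(v, Q, W, S). (take (D * nlows) (Q D), answer N D K server_answer D (v, Q, W, S), W v)"
      and B = "\<lambda>(v, Q, W, S). (v, W(v := (\<lambda>_. 0)))"
      and F = "\<lambda>(al, ad, x) v. user_view v al ad x" and g = fst and f = snd])
  show "map_pmf (\<lambda>w. ((\<lambda>(v, Q, W, S). (take (D * nlows) (Q D), answer N D K server_answer D (v, Q, W, S), W v)) w,
                     (\<lambda>(v, Q, W, S). (v, W(v := (\<lambda>_. 0)))) w)) (run :: 'f sample pmf)
     = pair_pmf (map_pmf (\<lambda>(\<alpha>, S', x). (map \<alpha> [0..<D * nlows], map S' [0..<K * D], x))
                 (pmf_of_set (crs (D * nlows) \<times> (crs (K * D) \<times> crs D))))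
         (bind_pmf P (\<lambda>v. map_pmf (Pair v) (pmf_of_set (dbs_without v))))"
  proof (rule map_pmf_outcome_eq_pair_pmf[where
        \<rho> = "\<lambda>v (\<alpha>, W, S). (map \<alpha> [0..<D * nlows], answer N D K server_answer D (v, query v \<alpha>, W, S), W v)"
        and \<beta> = "\<lambda>v (\<alpha>, W, S). W(v := (\<lambda>_. 0))"])
    fix v assume "v \<in> set_pmf P"
    then have "v \<in> attrs N K" using P_attrs by blast
    from coins_central_view_indep_rest[OF this]
    show "map_pmf (\<lambda>u. ((\<lambda>(\<alpha>, W, S). (map \<alpha> [0..<D * nlows], answer N D K server_answer D (v, query v \<alpha>, W, S), W v)) u,
                        (\<lambda>(\<alpha>, W, S). W(v := (\<lambda>_. 0))) u)) (pmf_of_set coins)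
       = pair_pmf (map_pmf (\<lambda>(\<alpha>, S', x). (map \<alpha> [0..<D * nlows], map S' [0..<K * D], x))
                 (pmf_of_set (crs (D * nlows) \<times> (crs (K * D) \<times> crs D)))) (pmf_of_set (dbs_without v))"
      by (simp add: case_prod_beta')
  qed (simp add: query_def query_of_def)
next
  fix w assume "w \<in> set_pmf (run :: 'f sample pmf)"
  then obtain v \<alpha> W S where w: "w = (v, query v \<alpha>, W, S)" and "v \<in> set_pmf P"
    by (elim set_pmf_outcomeE)
  then have v: "v \<in> attrs N K" using P_attrs by blast
  have "take (D * nlows) (query v \<alpha> D) = map \<alpha> [0..<D * nlows]"
    by (simp add: query_def query_of_def)
  then show "(\<lambda>w. (map ((\<lambda>(v, Q, W, S). Q) w) [0..<Suc D], map (\<lambda>n. answer N D K server_answer n w) [0..<Suc D])) w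
    = (\<lambda>(al, ad, x) v. user_view v al ad x)
        ((\<lambda>(v, Q, W, S). (take (D * nlows) (Q D), answer N D K server_answer D (v, Q, W, S), W v)) w)
        (fst ((\<lambda>(v, Q, W, S). (v, W(v := (\<lambda>_. 0)))) w))"
    using queries_answers_eq_user_view[OF v] unfolding w prod.case fst_conv by (simp only:)
qed (auto simp: finite_set_pmf_run)

lemma decodable:
  "CondEnt (run :: 'f::{finite,field} sample pmf)
      (\<lambda>w. ((\<lambda>(v, Q, W, S). W) w) ((\<lambda>(v, Q, W, S). v) w))
      (\<lambda>w. (map ((\<lambda>(v, Q, W, S). Q) w) [0..<Suc D], map (\<lambda>n. answer N D K server_answer n w) [0..<Suc D])) = 0"
proof (rule CondEnt_eq_0_if_determined[OF finite_set_pmf_run])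
  fix w w' assume "w \<in> set_pmf (run :: 'f sample pmf)" "w' \<in> set_pmf (run :: 'f sample pmf)"
  then obtain v \<alpha> W S v' \<alpha>' W' S' where w: "w = (v, query v \<alpha>, W, S)" and w': "w' = (v', query v' \<alpha>', W', S')"
    and "v \<in> set_pmf P" "v' \<in> set_pmf P" and W: "W \<in> dbs N K D" and W': "W' \<in> dbs N K D"
    by (elim set_pmf_outcomeE) (auto simp: coins_def)
  then have v: "v \<in> attrs N K" and v': "v' \<in> attrs N K" using P_attrs by blast+
  assume "(map ((\<lambda>(v, Q, W, S). Q) w) [0..<Suc D], map (\<lambda>n. answer N D K server_answer n w) [0..<Suc D])
      = (map ((\<lambda>(v, Q, W, S). Q) w') [0..<Suc D], map (\<lambda>n. answer N D K server_answer n w') [0..<Suc D])"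
  then have Q: "query v \<alpha> n = query v' \<alpha>' n"
    and A: "answer N D K server_answer n w = answer N D K server_answer n w'" if "n \<le> D" for n
    using that unfolding w w' by (simp_all del: upt_Suc)
  have "v = v'"
    by (rule attrs_eq_if_queries_eq[OF D_pos v v', of \<alpha> \<alpha>']) (simp_all add: Q)
  have "W v l = W' v' l" for l
  proof (cases "l < D")
    case True
    then show ?thesis
      using A[of l] A[of D] \<open>v = v'\<close>
      unfolding w w' answer_dedicated_eq_central[OF v True] answer_dedicated_eq_central[OF v' True] by simp
  next
    case False
    then show ?thesis using W W' by (simp add: dbs_def)
  qed
  then show "(\<lambda>w. ((\<lambda>(v, Q, W, S). W) w) ((\<lambda>(v, Q, W, S). v) w)) w
      = (\<lambda>w. ((\<lambda>(v, Q, W, S). W) w) ((\<lambda>(v, Q, W, S). v) w)) w'"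
    unfolding w w' by auto
qed

lemma construction_is_hetdapac_scheme: "hetdapac_scheme N D K P D (K * D) query_dist server_answer download"
  unfolding hetdapac_scheme_def Let_def
  using finite_query_dist length_answer queries_indep_database decodable
    dedicated_privacy central_privacy database_secrecy
  by blast

lemma download_rate: "real D / real (\<Sum>n\<le>D. download n) = 1 / real (K + 1)"
proof -
  have "(\<Sum>n\<le>D. download n) = (\<Sum>n<D. download n) + download D"
    by (simp add: lessThan_Suc_atMost[symmetric])
  also have "\<dots> = D * (K + 1)"
    by (simp add: download_def)
  finally show ?thesis
    using D_pos by (simp only: of_nat_mult nonzero_divide_mult_cancel_left of_nat_eq_0_iff neq0_conv)
qed

lemma download_load_ratio: "real (download 0) / real (download D) = 1 / real (K * D)"
  using D_pos by (simp add: download_def)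

end

theorem theorem1:
  fixes N D K :: nat and P :: "(nat \<Rightarrow> nat) pmf"
  assumes "1 \<le> D" and "D \<le> N" and "2 \<le> K" and "set_pmf P \<subseteq> attrs N K"
  shows "\<exists>(L::nat) (m::nat) (qd :: (nat \<Rightarrow> nat) \<Rightarrow> (nat \<Rightarrow> 'f::{finite,field} list) pmf) ans c.
           1 \<le> L
         \<and> hetdapac_scheme N D K P L m qd ans c
         \<and> real L / real (\<Sum>n\<le>D. c n) = 1 / real (K + 1)
         \<and> (\<forall>n<D. c n = c 0)
         \<and> real (c 0) / real (c D) = 1 / real (K * D)
         \<and> Ent (outcome N K L m P qd) (\<lambda>(v, Q, W, S). S) \<ge> real (K * L) * log 2 (real CARD('f))"
proof -
  interpret hetdapac_run N D K P
    using assms by unfold_locales simp_all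
  have "\<forall>n<D. download n = download 0"
    using assms(1) by (simp add: download_def)
  then show ?thesis
    using assms(1) construction_is_hetdapac_scheme download_rate download_load_ratio Ent_common_randomness by blast
qed

end
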